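(* Let $\mathcal{D}$ be a probability distribution, and for each $\xi\sim\mathcal{D}$ let $f_\xi:\mathbb{R}^d\to\mathbb{R}$ be differentiable and $\mu$-strongly convex with a common constant $\mu>0$, i.e. $f_\xi(y)+\langle\nabla f_\xi(y),x-y\rangle+\frac{\mu}{2}\|x-y\|^2\le f_\xi(x)$ for all $x,y\in\mathbb{R}^d$. Let $f(x)=\mathbb{E}_{\xi\sim\mathcal{D}}[f_\xi(x)]$ and let $x_\star$ be its unique minimizer. Let $\{x_k,\phi_k,h_k\}$ be produced by SPPM-LC (see context) and suppose the $\sigma_k^2$-assumption (see context) holds with function $\sigma^2:\mathbb{R}^m\to\mathbb{R}_+$ and constants $A_1,B_1,C_1,A_2,B_2,C_2\ge 0$, $B_2<1$. Choose any $\gamma>0$ and $\alpha>0$ satisfying $$\frac{(1+\gamma^2A_1)(1+\alpha A_2)}{(1+\gamma\mu)^2}<1,\qquad \frac{\gamma^2B_1(1+\alpha A_2)}{\alpha(1+\gamma\mu)^2}+B_2<1,$$ and define $\Psi_k:=\|x_k-x_\star\|^2+\alpha\sigma_k^2$, where $\sigma_k^2=\sigma^2(\phi_k)$. Then for all $k\ge 0$, $$\mathbb{E}[\Psi_k]\le\theta^k\Psi_0+\frac{\zeta}{1-\theta},$$ where $$\theta=\max\left\{\frac{(1+\gamma^2A_1)(1+\alpha A_2)}{(1+\gamma\mu)^2},\ \frac{\gamma^2B_1(1+\alpha A_2)}{\alpha(1+\gamma\mu)^2}+B_2\right\}\in[0,1),\qquad \zeta=\frac{\gamma^2C_1(1+\alpha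 A_2)}{(1+\gamma\mu)^2}+\alpha C_2\ge 0.$$
   Context: Notation: $\operatorname{prox}_{\gamma\phi}(y):=\arg\min_{x\in\mathbb{R}^d}\{\phi(x)+\frac{1}{2\gamma}\|x-y\|^2\}$. It is assumed that differentiation and expectation can be interchanged, so $\nabla f(x)=\mathbb{E}_{\xi\sim\mathcal{D}}[\nabla f_\xi(x)]$. Algorithm SPPM-LC (Stochastic Proximal Point Method with Learned Correction): parameters $\gamma>0$, starting point $x_0\in\mathbb{R}^d$, control vector $\phi_0\in\mathbb{R}^m$. For $k=0,1,2,\dots$: sample $\xi_k\sim\mathcal{D}$ (independently of the past); form a correction vector $h_k\in\mathbb{R}^d$ as a function of $x_k$, $\phi_k$ and $\xi_k$; set $x_{k+1}=\operatorname{prox}_{\gamma f_{\xi_k}}(x_k+\gamma h_k)$; construct a new (possibly random) control vector $\phi_{k+1}\in\mathbb{R}^m$. $\sigma_k^2$-assumption: there exist a function $\sigma^2:\mathbb{R}^m\to\mathbb{R}_+$ and nonnegative constants $A_1,B_1,C_1,A_2,B_2,C_2$ with $B_2<1$ such that, writing $\sigma_k^2:=\sigma^2(\phi_k)$, for all $k\ge0$: (i) $\mathbb{E}[h_k\mid x_k,\phi_k]=0$; (ii) $\mathbb{E}[\|h_k-\nabla f_{\xi_k}(x_\star)\|^2\mid x_k,\phi_k]\le A_1\|x_k-x_\star\|^2+B_1\sigma_k^2+C_1$; (iii) $\mathbb{E}[\sigma_{k+1}^2\mid x_{k+1},\phi_k]\le A_2\|x_{k+1}-x_\star\|^2+B_2\sigma_k^2+C_2$.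 *)

theory Defs
  imports "HOL-Analysis.Analysis" "HOL-Probability.Probability"
begin

definition prox :: "real \<Rightarrow> ('a::real_normed_vector \<Rightarrow> real) \<Rightarrow> 'a \<Rightarrow> 'a" where
  "prox \<gamma> \<phi> y = (ARG_MIN (\<lambda>x. \<phi> x + (1 / (2 * \<gamma>)) * (norm (x - y))\<^sup>2) x. True)"

definition gen_alg :: "'w measure \<Rightarrow> ('w \<Rightarrow> 'b::topological_space) \<Rightarrow> 'w measure" where
  "gen_alg M Y = vimage_algebra (space M) Y borel"

text \<open>Events of the past of SPPM-LC before sampling xi_k:
  generated by x_0..x_k, phi_0..phi_k, xi_0..xi_(k-1), h_0..h_(k-1).\<close>
definition past_events ::
  "'w measure \<Rightarrow> 'xi measure \<Rightarrow> (nat \<Rightarrow> 'w \<Rightarrow> 'a::topological_space) \<Rightarrow> (nat \<Rightarrow> 'w \<Rightarrow> 'c::topological_space)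
    \<Rightarrow> (nat \<Rightarrow> 'w \<Rightarrow> 'xi) \<Rightarrow> (nat \<Rightarrow> 'w \<Rightarrow> 'a) \<Rightarrow> nat \<Rightarrow> 'w set set" where
  "past_events M D x \<phi> \<xi> h k = sigma_sets (space M)
     ((\<Union>j\<le>k. {x j -` A \<inter> space M | A. A \<in> sets borel})
    \<union> (\<Union>j\<le>k. {\<phi> j -` A \<inter> space M | A. A \<in> sets borel})
    \<union> (\<Union>j<k. {\<xi> j -` A \<inter> space M | A. A \<in> sets D})
    \<union> (\<Union>j<k. {h j -` A \<inter> space M | A. A \<in> sets borel}))"

end

theory Submission
  imports Defs
begin

(* Each step of SPPM-LC is a proximal step for a mu-strongly convex function, so it contracts
   the distance to x_star by the factor 1 + gamma mu once the shift gamma g_xi(x_star) is taken into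
   account: (1 + gamma mu)^2 |x_{k+1} - x_star|^2 <= |x_k - x_star + gamma (h_k - g_{xi_k}(x_star))|^2.
   Expanding the square, the cross term has mean zero: h_k is conditionally centred given
   (x_k, phi_k), and g_{xi_k}(x_star) is independent of x_k with mean grad f(x_star) = 0.
   Assumption (ii) bounds the remaining term and (iii) controls sigma_{k+1}^2, which gives
   E Psi_{k+1} <= theta E Psi_k + zeta; unrolling this recursion yields the claim. *)

lemma gderiv_zero_at_minimum:
  fixes F :: "'a::real_inner \<Rightarrow> real"
  assumes "GDERIV F p :> G" and "\<And>u. F p \<le> F u"
  shows "G = 0"
proof -
  have "(\<lambda>v. inner v G) = (\<lambda>v. 0)"
    using assms(1) unfolding gderiv_def
    by (rule has_derivative_local_min) (simp add: assms(2))
  then have "inner G G = 0" by metis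
  then show ?thesis by simp
qed

lemma strongly_convex_gradient_monotone:
  fixes F :: "'a::real_inner \<Rightarrow> real"
  assumes "\<And>u y. F y + inner (G y) (u - y) + \<mu> / 2 * (norm (u - y))\<^sup>2 \<le> F u"
  shows "\<mu> * (norm (p - q))\<^sup>2 \<le> inner (p - q) (G p - G q)"
proof -
  have "F q + inner (G q) (p - q) + \<mu> / 2 * (norm (p - q))\<^sup>2 \<le> F p"
    and "F p + inner (G p) (q - p) + \<mu> / 2 * (norm (q - p))\<^sup>2 \<le> F q"
    using assms by blast+
  then show ?thesis
    by (simp add: norm_minus_commute[of q p] inner_diff_right inner_diff_left inner_commute algebra_simps)
qed

lemma power2_norm_add_scaleR:
  fixes a b :: "'a::real_inner"
  shows "(norm (a + t *\<^sub>R b))\<^sup>2 = (norm a)\<^sup>2 + 2 * t * inner a b + t\<^sup>2 * (norm b)\<^sup>2"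
  unfolding power2_norm_eq_inner
  by (simp add: inner_add_left inner_add_right inner_commute[of b a] power2_eq_square algebra_simps)

lemma norm_add_scaleR_ge_of_inner_ge:
  fixes a b :: "'a::real_inner"
  assumes ab: "\<mu> * (norm a)\<^sup>2 \<le> inner a b" and "0 \<le> \<mu>" "0 \<le> \<gamma>"
  shows "(1 + \<gamma> * \<mu>)\<^sup>2 * (norm a)\<^sup>2 \<le> (norm (a + \<gamma> *\<^sub>R b))\<^sup>2"
proof -
  have "norm a * (\<mu> * norm a) \<le> norm a * norm b"
    using ab norm_cauchy_schwarz[of a b] by (simp add: power2_eq_square algebra_simps)
  then have "\<mu> * norm a \<le> norm b"
    by (cases "norm a = 0") (simp_all add: \<open>0 \<le> \<mu>\<close>)
  then have b: "(\<mu> * norm a)\<^sup>2 \<le> (norm b)\<^sup>2"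
    using \<open>0 \<le> \<mu>\<close> by (intro power_mono) auto
  have "(norm (a + \<gamma> *\<^sub>R b))\<^sup>2 = (norm a)\<^sup>2 + 2 * \<gamma> * inner a b + \<gamma>\<^sup>2 * (norm b)\<^sup>2"
    by (rule power2_norm_add_scaleR)
  also have "\<dots> \<ge> (norm a)\<^sup>2 + 2 * \<gamma> * (\<mu> * (norm a)\<^sup>2) + \<gamma>\<^sup>2 * (\<mu> * norm a)\<^sup>2"
    using assms b by (intro add_mono mult_left_mono) auto
  finally show ?thesis by (simp add: power2_eq_square algebra_simps)
qed

lemma convex_prox_objective_has_minimizer:
  fixes F :: "'a::euclidean_space \<Rightarrow> real"
  assumes grad: "\<And>y. GDERIV F y :> G y"
    and convex: "\<And>u y. F y + inner (G y) (u - y) \<le> F u"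
    and "0 < \<gamma>"
  shows "\<exists>p. is_arg_min (\<lambda>u. F u + 1 / (2 * \<gamma>) * (norm (u - y))\<^sup>2) (\<lambda>u. True) p"
proof -
  define Q where "Q = (\<lambda>u. F u + 1 / (2 * \<gamma>) * (norm (u - y))\<^sup>2)"
  have "continuous_on UNIV F"
    using grad unfolding gderiv_def
    by (meson continuous_at_imp_continuous_on has_derivative_continuous)
  then have contQ: "continuous_on UNIV Q"
    unfolding Q_def by (intro continuous_intros)
  define K where "K = {u. Q u \<le> Q y}"
  have "K \<subseteq> cball y (2 * \<gamma> * norm (G y))"
  proof
    fix u assume "u \<in> K"
    then have "1 / (2 * \<gamma>) * (norm (u - y))\<^sup>2 \<le> - inner (G y) (u - y)"
      using convex[of y u] by (simp add: K_def Q_def)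
    also have "\<dots> \<le> norm (G y) * norm (u - y)"
      using norm_cauchy_schwarz[of "G y" "y - u"] by (simp add: inner_diff_right norm_minus_commute)
    finally have "norm (u - y) * norm (u - y) \<le> (2 * \<gamma> * norm (G y)) * norm (u - y)"
      using \<open>0 < \<gamma>\<close> by (simp add: field_simps power2_eq_square)
    then have "norm (u - y) \<le> 2 * \<gamma> * norm (G y)"
      using \<open>0 < \<gamma>\<close> by (cases "norm (u - y) = 0") (auto simp: mult_le_cancel_right)
    then show "u \<in> cball y (2 * \<gamma> * norm (G y))" by (simp add: dist_norm norm_minus_commute)
  qed
  moreover have "closed K"
    unfolding K_def by (intro closed_Collect_le contQ continuous_intros)
  ultimately have "compact K"
    by (meson bounded_cball bounded_subset compact_eq_bounded_closed)
  moreover have "y \<in> K" by (simp add: K_def)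
  ultimately obtain p where "p \<in> K" and "\<forall>u\<in>K. Q p \<le> Q u"
    using continuous_attains_inf[of K Q] contQ continuous_on_subset by blast
  then have "Q p \<le> Q u" for u
    by (cases "u \<in> K") (auto simp: K_def)
  then show ?thesis by (auto simp: Q_def is_arg_min_def not_less)
qed

lemma prox_optimality:
  fixes F :: "'a::euclidean_space \<Rightarrow> real"
  assumes grad: "\<And>y. GDERIV F y :> G y"
    and convex: "\<And>u y. F y + inner (G y) (u - y) \<le> F u"
    and "0 < \<gamma>"
  shows "y - prox \<gamma> F y = \<gamma> *\<^sub>R G (prox \<gamma> F y)"
proof -
  define Q where "Q = (\<lambda>u. F u + 1 / (2 * \<gamma>) * (norm (u - y))\<^sup>2)"
  define p where "p = prox \<gamma> F y"
  have "is_arg_min Q (\<lambda>u. True) p"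
    unfolding p_def prox_def arg_min_def Q_def
    using convex_prox_objective_has_minimizer[OF assms] by (rule someI_ex)
  then have "Q p \<le> Q u" for u by (simp add: is_arg_min_def not_less)
  moreover have "GDERIV Q p :> G p + (1 / \<gamma>) *\<^sub>R (p - y)"
    unfolding gderiv_def Q_def power2_norm_eq_inner
    using grad[of p, unfolded gderiv_def] \<open>0 < \<gamma>\<close>
    by (auto intro!: derivative_eq_intros ext
        simp: inner_add_right inner_diff_left inner_diff_right inner_commute field_simps power2_eq_square)
  ultimately have "G p + (1 / \<gamma>) *\<^sub>R (p - y) = 0"
    by (intro gderiv_zero_at_minimum) auto
  then have "\<gamma> *\<^sub>R (G p + (1 / \<gamma>) *\<^sub>R (p - y)) = 0" by simp
  then show ?thesis using \<open>0 < \<gamma>\<close> by (simp add: p_def[symmetric] algebra_simps)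
qed

lemma prox_strongly_convex_contraction:
  fixes F :: "'a::euclidean_space \<Rightarrow> real"
  assumes grad: "\<And>y. GDERIV F y :> G y"
    and strong: "\<And>u y. F y + inner (G y) (u - y) + \<mu> / 2 * (norm (u - y))\<^sup>2 \<le> F u"
    and "0 \<le> \<mu>" "0 < \<gamma>"
  shows "(1 + \<gamma> * \<mu>)\<^sup>2 * (norm (prox \<gamma> F y - z))\<^sup>2 \<le> (norm (y - z - \<gamma> *\<^sub>R G z))\<^sup>2"
proof -
  define p where "p = prox \<gamma> F y"
  have "F v + inner (G v) (u - v) \<le> F u" for u v
    using strong[of v u] \<open>0 \<le> \<mu>\<close> by (smt (verit) mult_nonneg_nonneg zero_le_power2 divide_nonneg_pos)
  then have "y - p = \<gamma> *\<^sub>R G p"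
    unfolding p_def using grad \<open>0 < \<gamma>\<close> by (intro prox_optimality)
  then have "y - z - \<gamma> *\<^sub>R G z = (p - z) + \<gamma> *\<^sub>R (G p - G z)"
    by (simp add: algebra_simps)
  moreover have "(1 + \<gamma> * \<mu>)\<^sup>2 * (norm (p - z))\<^sup>2 \<le> (norm ((p - z) + \<gamma> *\<^sub>R (G p - G z)))\<^sup>2"
    using strongly_convex_gradient_monotone[OF strong] assms
    by (intro norm_add_scaleR_ge_of_inner_ge) auto
  ultimately show ?thesis by (simp only: p_def)
qed

lemma sigma_finite_subalgebra_gen_alg:
  assumes "prob_space M" "Y \<in> borel_measurable M"
  shows "sigma_finite_subalgebra M (gen_alg M Y)"
proof -
  interpret prob_space M by fact
  have "subalgebra M (gen_alg M Y)"
    unfolding subalgebra_def gen_alg_def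
    using sets_image_in_sets[OF refl assms(2)] by simp
  then have "finite_measure_subalgebra M (gen_alg M Y)"
    unfolding finite_measure_subalgebra_def finite_measure_subalgebra_axioms_def
    using finite_measure_axioms by auto
  then show ?thesis by (rule finite_measure_subalgebra_is_sigma_finite)
qed

lemma measurable_gen_alg_compose:
  assumes "u \<in> borel_measurable borel"
  shows "(\<lambda>w. u (Y w)) \<in> borel_measurable (gen_alg M Y)"
  unfolding gen_alg_def
  by (rule measurable_compose[OF measurable_vimage_algebra1 assms]) simp

lemma (in sigma_finite_subalgebra) integral_le_of_nn_cond_exp_le:
  fixes f b :: "'a \<Rightarrow> real"
  assumes [measurable]: "f \<in> borel_measurable M"
    and "\<And>w. 0 \<le> f w" "\<And>w. 0 \<le> b w" "integrable M b"
    and "AE w in M. nn_cond_exp M F (\<lambda>w. ennreal (f w)) w \<le> ennreal (b w)"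
  shows "integrable M f" and "(\<integral>w. f w \<partial>M) \<le> (\<integral>w. b w \<partial>M)"
proof -
  have "(\<integral>\<^sup>+w. ennreal (f w) \<partial>M) = (\<integral>\<^sup>+w. nn_cond_exp M F (\<lambda>w. ennreal (f w)) w \<partial>M)"
    using nn_cond_exp_intg[of "\<lambda>_. 1" "\<lambda>w. ennreal (f w)"] by simp
  also have "\<dots> \<le> (\<integral>\<^sup>+w. ennreal (b w) \<partial>M)"
    using assms(5) by (rule nn_integral_mono_AE)
  also have "\<dots> = ennreal (\<integral>w. b w \<partial>M)"
    using assms by (intro nn_integral_eq_integral) auto
  finally have le: "(\<integral>\<^sup>+w. ennreal (f w) \<partial>M) \<le> ennreal (\<integral>w. b w \<partial>M)" .
  then show int: "integrable M f"
    using assms(2) by (intro integrableI_nonneg) (auto simp: le_less_trans)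
  have "(\<integral>\<^sup>+w. ennreal (f w) \<partial>M) = ennreal (\<integral>w. f w \<partial>M)"
    using int assms(2) by (intro nn_integral_eq_integral) auto
  with le show "(\<integral>w. f w \<partial>M) \<le> (\<integral>w. b w \<partial>M)"
    using assms(3) by (simp add: integral_nonneg_AE)
qed

lemma (in sigma_finite_subalgebra) integral_mult_eq_0_of_real_cond_exp_eq_0:
  fixes a h :: "'a \<Rightarrow> real"
  assumes "integrable M (\<lambda>w. a w * h w)" "a \<in> borel_measurable F" "h \<in> borel_measurable M"
    and "AE w in M. real_cond_exp M F h w = 0"
  shows "(\<integral>w. a w * h w \<partial>M) = 0"
proof -
  have "(\<integral>w. a w * h w \<partial>M) = (\<integral>w. a w * real_cond_exp M F h w \<partial>M)"
    using real_cond_exp_intg(2)[OF assms(1-3)] by simp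
  also have "\<dots> = (\<integral>w. 0 \<partial>M)"
    using assms(2,4) by (intro integral_cong_AE) (auto intro: measurable_from_subalg[OF subalg])
  finally show ?thesis by simp
qed

lemma vimage_compose_subset:
  assumes X: "X \<in> measurable M S" and u: "u \<in> measurable S N"
  shows "{(\<lambda>w. u (X w)) -` A \<inter> space M | A. A \<in> sets N} \<subseteq> {X -` A \<inter> space M | A. A \<in> sets S}"
proof safe
  fix A assume "A \<in> sets N"
  then have "u -` A \<inter> space S \<in> sets S" by (rule measurable_sets[OF u])
  moreover have "(\<lambda>w. u (X w)) -` A \<inter> space M = X -` (u -` A \<inter> space S) \<inter> space M"
    using X by (auto simp: measurable_space)
  ultimately show "\<exists>B. (\<lambda>w. u (X w)) -` A \<inter> space M = X -` B \<inter> space M \<and> B \<in> sets S" by blast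
qed

lemma (in prob_space) indep_var_compose_of_indep_set:
  assumes indep: "indep_set {X -` A \<inter> space M | A. A \<in> sets S} (sigma_sets (space M) G)"
    and X: "X \<in> measurable M S" and u: "u \<in> measurable S N1"
    and Y: "Y \<in> measurable M T" and v: "v \<in> measurable T N2"
    and gen: "{Y -` A \<inter> space M | A. A \<in> sets T} \<subseteq> G"
  shows "indep_var N1 (\<lambda>w. u (X w)) N2 (\<lambda>w. v (Y w))"
proof -
  have "sigma_sets (space M) {X -` A \<inter> space M | A. A \<in> sets S} = sets (vimage_algebra (space M) X S)"
    using sets_vimage_algebra[of "space M" X S] by simp
  also have "\<dots> = {X -` A \<inter> space M | A. A \<in> sets S}"
    using X by (intro sets_vimage_algebra2) (simp add: measurable_def)
  finally have "sigma_sets (space M) {(\<lambda>w. u (X w)) -` A \<inter> space M | A. A \<in> sets N1}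
      \<subseteq> {X -` A \<inter> space M | A. A \<in> sets S}"
    using sigma_sets_mono'[OF vimage_compose_subset[OF X u], of "space M"] by simp
  moreover have "sigma_sets (space M) {(\<lambda>w. v (Y w)) -` A \<inter> space M | A. A \<in> sets N2}
      \<subseteq> sigma_sets (space M) G"
    using vimage_compose_subset[OF Y v] gen by (intro sigma_sets_mono') blast
  ultimately have "indep_set
      (sigma_sets (space M) {(\<lambda>w. u (X w)) -` A \<inter> space M | A. A \<in> sets N1})
      (sigma_sets (space M) {(\<lambda>w. v (Y w)) -` A \<inter> space M | A. A \<in> sets N2})"
    unfolding indep_set_def
    by (intro indep_sets_mono_sets[OF indep[unfolded indep_set_def]]) (auto split: bool.split)
  moreover have "random_variable N1 (\<lambda>w. u (X w))" "random_variable N2 (\<lambda>w. v (Y w))"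
    using measurable_compose[OF X u] measurable_compose[OF Y v] by simp_all
  ultimately show ?thesis unfolding indep_var_eq by blast
qed

lemma integrable_mult_of_square_integrable:
  fixes a b :: "'w \<Rightarrow> real"
  assumes "a \<in> borel_measurable M" "b \<in> borel_measurable M"
    and "integrable M (\<lambda>w. (a w)\<^sup>2)" "integrable M (\<lambda>w. (b w)\<^sup>2)"
  shows "integrable M (\<lambda>w. a w * b w)"
proof (rule Bochner_Integration.integrable_bound)
  show "integrable M (\<lambda>w. (a w)\<^sup>2 + (b w)\<^sup>2)" using assms by simp
  show "AE w in M. norm (a w * b w) \<le> norm ((a w)\<^sup>2 + (b w)\<^sup>2)"
  proof (intro AE_I2)
    fix w
    have "2 * \<bar>a w\<bar> * \<bar>b w\<bar> \<le> (a w)\<^sup>2 + (b w)\<^sup>2"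
      using sum_squares_bound[of "\<bar>a w\<bar>" "\<bar>b w\<bar>"] by simp
    then have "\<bar>a w\<bar> * \<bar>b w\<bar> \<le> (a w)\<^sup>2 + (b w)\<^sup>2"
      using mult_nonneg_nonneg[of "\<bar>a w\<bar>" "\<bar>b w\<bar>"] by linarith
    then show "norm (a w * b w) \<le> norm ((a w)\<^sup>2 + (b w)\<^sup>2)" by (simp add: abs_mult)
  qed
qed (use assms in simp)

lemma integrable_inner_Basis_square:
  fixes v :: "'w \<Rightarrow> 'a::euclidean_space"
  assumes "v \<in> borel_measurable M" "integrable M (\<lambda>w. (norm (v w))\<^sup>2)" "e \<in> Basis"
  shows "integrable M (\<lambda>w. (inner (v w) e)\<^sup>2)"
proof (rule Bochner_Integration.integrable_bound)
  show "AE w in M. norm ((inner (v w) e)\<^sup>2) \<le> norm ((norm (v w))\<^sup>2)"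
    using Basis_le_norm[OF assms(3)] by (intro AE_I2) (simp add: abs_le_square_iff[symmetric])
qed (use assms in simp_all)

locale sppm_lc = prob_space M for M :: "'w measure" +
  fixes D :: "'xi measure"
    and f :: "'xi \<Rightarrow> 'a::euclidean_space \<Rightarrow> real" and g :: "'xi \<Rightarrow> 'a \<Rightarrow> 'a"
    and \<mu> \<gamma> :: real and xs x0 :: 'a and \<phi>0 :: "'c::euclidean_space"
    and x :: "nat \<Rightarrow> 'w \<Rightarrow> 'a" and \<phi> :: "nat \<Rightarrow> 'w \<Rightarrow> 'c"
    and \<xi> :: "nat \<Rightarrow> 'w \<Rightarrow> 'xi" and h :: "nat \<Rightarrow> 'w \<Rightarrow> 'a"
    and \<sigma>2 :: "'c \<Rightarrow> real" and A1 B1 C1 A2 B2 C2 :: real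
  assumes grad: "\<And>s y. s \<in> space D \<Longrightarrow> GDERIV (f s) y :> g s y"
    and strong: "\<And>s u y. s \<in> space D \<Longrightarrow>
        f s y + inner (g s y) (u - y) + \<mu> / 2 * (norm (u - y))\<^sup>2 \<le> f s u"
    and mu_nonneg: "0 \<le> \<mu>" and gamma_pos: "0 < \<gamma>"
    and integrable_grad_xs: "integrable D (\<lambda>s. g s xs)"
    and mean_grad_xs: "(\<integral>s. g s xs \<partial>D) = 0"
    and x_meas [measurable]: "\<And>k. x k \<in> borel_measurable M"
    and phi_meas [measurable]: "\<And>k. \<phi> k \<in> borel_measurable M"
    and h_meas [measurable]: "\<And>k. h k \<in> borel_measurable M"
    and xi_meas [measurable]: "\<And>k. \<xi> k \<in> measurable M D"
    and xi_distr: "\<And>k. distr M D (\<xi> k) = D"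
    and xi_indep: "\<And>k. indep_set
         {\<xi> k -` A \<inter> space M | A. A \<in> sets D} (past_events M D x \<phi> \<xi> h k)"
    and x_init: "\<And>w. w \<in> space M \<Longrightarrow> x 0 w = x0"
    and phi_init: "\<And>w. w \<in> space M \<Longrightarrow> \<phi> 0 w = \<phi>0"
    and x_step: "\<And>k w. w \<in> space M \<Longrightarrow>
        x (Suc k) w = prox \<gamma> (f (\<xi> k w)) (x k w + \<gamma> *\<^sub>R h k w)"
    and sigma_nonneg: "\<And>c. 0 \<le> \<sigma>2 c"
    and sigma_meas [measurable]: "\<sigma>2 \<in> borel_measurable borel"
    and consts_nonneg: "0 \<le> A1" "0 \<le> B1" "0 \<le> C1" "0 \<le> A2" "0 \<le> B2" "0 \<le> C2"
    and cond_mean_h: "\<And>k b. b \<in> Basis \<Longrightarrow>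
        AE w in M. real_cond_exp M (gen_alg M (\<lambda>w. (x k w, \<phi> k w))) (\<lambda>w. inner (h k w) b) w = 0"
    and cond_second_moment_h: "\<And>k. AE w in M.
        nn_cond_exp M (gen_alg M (\<lambda>w. (x k w, \<phi> k w)))
          (\<lambda>w. ennreal ((norm (h k w - g (\<xi> k w) xs))\<^sup>2)) w
        \<le> ennreal (A1 * (norm (x k w - xs))\<^sup>2 + B1 * \<sigma>2 (\<phi> k w) + C1)"
    and cond_mean_sigma: "\<And>k. AE w in M.
        nn_cond_exp M (gen_alg M (\<lambda>w. (x (Suc k) w, \<phi> k w)))
          (\<lambda>w. ennreal (\<sigma>2 (\<phi> (Suc k) w))) w
        \<le> ennreal (A2 * (norm (x (Suc k) w - xs))\<^sup>2 + B2 * \<sigma>2 (\<phi> k w) + C2)"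
begin

lemma borel_measurable_grad_xs [measurable]: "(\<lambda>s. g s xs) \<in> borel_measurable D"
  using integrable_grad_xs by (rule borel_measurable_integrable)

lemma xi_in_space: "w \<in> space M \<Longrightarrow> \<xi> k w \<in> space D"
  using xi_meas by (meson measurable_space)

lemma iterate_dist_contraction:
  assumes "w \<in> space M"
  shows "(1 + \<gamma> * \<mu>)\<^sup>2 * (norm (x (Suc k) w - xs))\<^sup>2
    \<le> (norm (x k w - xs + \<gamma> *\<^sub>R (h k w - g (\<xi> k w) xs)))\<^sup>2"
proof -
  have s: "\<xi> k w \<in> space D" using xi_in_space[OF assms] .
  have "(1 + \<gamma> * \<mu>)\<^sup>2 * (norm (x (Suc k) w - xs))\<^sup>2
      \<le> (norm (x k w + \<gamma> *\<^sub>R h k w - xs - \<gamma> *\<^sub>R g (\<xi> k w) xs))\<^sup>2"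
    unfolding x_step[OF assms]
    by (rule prox_strongly_convex_contraction[OF grad[OF s] strong[OF s] mu_nonneg gamma_pos])
  then show ?thesis by (simp add: algebra_simps)
qed

(* Stated for real-valued functions of \<xi> k and x k only: indep_var needs both random variables
   to take values in the same type. *)
lemma indep_var_xi_x:
  assumes "u \<in> borel_measurable D" "v \<in> borel_measurable borel"
  shows "indep_var borel (\<lambda>w. u (\<xi> k w)) borel (\<lambda>w. (v (x k w)::real))"
proof -
  have "{x k -` A \<inter> space M | A. A \<in> sets borel} \<subseteq> (\<Union>j\<le>k. {x j -` A \<inter> space M | A. A \<in> sets borel})"
    by (intro UN_upper) simp
  then show ?thesis
    using xi_indep[of k] xi_meas assms x_meas unfolding past_events_def
    by (intro indep_var_compose_of_indep_set[where G = "_ \<union> _ \<union> _ \<union> _"]) auto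
qed

lemma integral_inner_grad_xs_eq_0:
  assumes "integrable M (\<lambda>w. (norm (x k w - xs))\<^sup>2)" "e \<in> Basis"
  shows "integrable M (\<lambda>w. inner (g (\<xi> k w) xs) e * inner (x k w - xs) e)"
    and "(\<integral>w. inner (g (\<xi> k w) xs) e * inner (x k w - xs) e \<partial>M) = 0"
proof -
  have indep: "indep_var borel (\<lambda>w. inner (g (\<xi> k w) xs) e) borel (\<lambda>w. inner (x k w - xs) e)"
    using indep_var_xi_x[of "\<lambda>s. inner (g s xs) e" "\<lambda>v. inner (v - xs) e" k] by simp
  have int_x: "integrable M (\<lambda>w. inner (x k w - xs) e)"
    by (rule square_integrable_imp_integrable[OF _ integrable_inner_Basis_square[OF _ assms]]) simp_all
  have distr_g: "integrable (distr M D (\<xi> k)) (\<lambda>s. inner (g s xs) e)"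
    using integrable_inner_left[OF integrable_grad_xs] xi_distr[of k] by simp
  then have int_g: "integrable M (\<lambda>w. inner (g (\<xi> k w) xs) e)"
    using integrable_distr_eq[of "\<xi> k" M D "\<lambda>s. inner (g s xs) e"] by simp
  have "(\<integral>w. inner (g (\<xi> k w) xs) e \<partial>M) = (\<integral>s. inner (g s xs) e \<partial>distr M D (\<xi> k))"
    using integral_distr[of "\<xi> k" M D "\<lambda>s. inner (g s xs) e"] by simp
  also have "\<dots> = inner (\<integral>s. g s xs \<partial>D) e"
    using xi_distr[of k] integrable_grad_xs by simp
  finally have mean_g: "(\<integral>w. inner (g (\<xi> k w) xs) e \<partial>M) = 0"
    using mean_grad_xs by simp
  show "integrable M (\<lambda>w. inner (g (\<xi> k w) xs) e * inner (x k w - xs) e)"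
    by (rule indep_var_integrable[OF indep int_g int_x])
  show "(\<integral>w. inner (g (\<xi> k w) xs) e * inner (x k w - xs) e \<partial>M) = 0"
    using indep_var_lebesgue_integral[OF indep int_g int_x] mean_g by simp
qed

lemma integral_inner_h_eq_0:
  assumes "integrable M (\<lambda>w. inner (x k w - xs) e * inner (h k w) e)" "e \<in> Basis"
  shows "(\<integral>w. inner (x k w - xs) e * inner (h k w) e \<partial>M) = 0"
proof -
  let ?F = "gen_alg M (\<lambda>w. (x k w, \<phi> k w))"
  interpret F: sigma_finite_subalgebra M ?F
    by (rule sigma_finite_subalgebra_gen_alg) (simp_all add: prob_space_axioms)
  have "(\<lambda>w. (\<lambda>q. inner (fst q - xs) e) (x k w, \<phi> k w)) \<in> borel_measurable ?F"
    by (intro measurable_gen_alg_compose borel_measurable_continuous_onI continuous_intros)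
  then have "(\<lambda>w. inner (x k w - xs) e) \<in> borel_measurable ?F" by simp
  then show ?thesis
    by (rule F.integral_mult_eq_0_of_real_cond_exp_eq_0[OF assms(1) _ _ cond_mean_h[OF assms(2)]]) simp
qed

lemma noise_second_moment:
  assumes "integrable M (\<lambda>w. (norm (x k w - xs))\<^sup>2)" "integrable M (\<lambda>w. \<sigma>2 (\<phi> k w))"
  shows "integrable M (\<lambda>w. (norm (h k w - g (\<xi> k w) xs))\<^sup>2)"
    and "(\<integral>w. (norm (h k w - g (\<xi> k w) xs))\<^sup>2 \<partial>M)
      \<le> A1 * (\<integral>w. (norm (x k w - xs))\<^sup>2 \<partial>M) + B1 * (\<integral>w. \<sigma>2 (\<phi> k w) \<partial>M) + C1"
proof -
  interpret F: sigma_finite_subalgebra M "gen_alg M (\<lambda>w. (x k w, \<phi> k w))"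
    by (rule sigma_finite_subalgebra_gen_alg) (simp_all add: prob_space_axioms)
  have b_int: "integrable M (\<lambda>w. A1 * (norm (x k w - xs))\<^sup>2 + B1 * \<sigma>2 (\<phi> k w) + C1)"
    using assms by simp
  have b_nonneg: "0 \<le> A1 * (norm (x k w - xs))\<^sup>2 + B1 * \<sigma>2 (\<phi> k w) + C1" for w
    by (simp add: consts_nonneg sigma_nonneg)
  have "(\<lambda>w. (norm (h k w - g (\<xi> k w) xs))\<^sup>2) \<in> borel_measurable M" by measurable
  note bound = F.integral_le_of_nn_cond_exp_le[OF this _ b_nonneg b_int cond_second_moment_h[of k]]
  show "integrable M (\<lambda>w. (norm (h k w - g (\<xi> k w) xs))\<^sup>2)"
    using bound(1) by simp
  have "(\<integral>w. A1 * (norm (x k w - xs))\<^sup>2 + B1 * \<sigma>2 (\<phi> k w) + C1 \<partial>M)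
      = A1 * (\<integral>w. (norm (x k w - xs))\<^sup>2 \<partial>M) + B1 * (\<integral>w. \<sigma>2 (\<phi> k w) \<partial>M) + C1"
    using assms by (simp add: prob_space)
  then show "(\<integral>w. (norm (h k w - g (\<xi> k w) xs))\<^sup>2 \<partial>M)
      \<le> A1 * (\<integral>w. (norm (x k w - xs))\<^sup>2 \<partial>M) + B1 * (\<integral>w. \<sigma>2 (\<phi> k w) \<partial>M) + C1"
    using bound(2) by simp
qed

lemma sigma_second_moment:
  assumes "integrable M (\<lambda>w. (norm (x (Suc k) w - xs))\<^sup>2)" "integrable M (\<lambda>w. \<sigma>2 (\<phi> k w))"
  shows "integrable M (\<lambda>w. \<sigma>2 (\<phi> (Suc k) w))"
    and "(\<integral>w. \<sigma>2 (\<phi> (Suc k) w) \<partial>M)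
      \<le> A2 * (\<integral>w. (norm (x (Suc k) w - xs))\<^sup>2 \<partial>M) + B2 * (\<integral>w. \<sigma>2 (\<phi> k w) \<partial>M) + C2"
proof -
  interpret F: sigma_finite_subalgebra M "gen_alg M (\<lambda>w. (x (Suc k) w, \<phi> k w))"
    by (rule sigma_finite_subalgebra_gen_alg) (simp_all add: prob_space_axioms)
  have b_int: "integrable M (\<lambda>w. A2 * (norm (x (Suc k) w - xs))\<^sup>2 + B2 * \<sigma>2 (\<phi> k w) + C2)"
    using assms by simp
  have b_nonneg: "0 \<le> A2 * (norm (x (Suc k) w - xs))\<^sup>2 + B2 * \<sigma>2 (\<phi> k w) + C2" for w
    by (simp add: consts_nonneg sigma_nonneg)
  have "(\<lambda>w. \<sigma>2 (\<phi> (Suc k) w)) \<in> borel_measurable M" by measurable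
  note bound = F.integral_le_of_nn_cond_exp_le[OF this sigma_nonneg b_nonneg b_int cond_mean_sigma[of k]]
  show "integrable M (\<lambda>w. \<sigma>2 (\<phi> (Suc k) w))"
    by (rule bound(1))
  have "(\<integral>w. A2 * (norm (x (Suc k) w - xs))\<^sup>2 + B2 * \<sigma>2 (\<phi> k w) + C2 \<partial>M)
      = A2 * (\<integral>w. (norm (x (Suc k) w - xs))\<^sup>2 \<partial>M) + B2 * (\<integral>w. \<sigma>2 (\<phi> k w) \<partial>M) + C2"
    using assms by (simp add: prob_space)
  then show "(\<integral>w. \<sigma>2 (\<phi> (Suc k) w) \<partial>M)
      \<le> A2 * (\<integral>w. (norm (x (Suc k) w - xs))\<^sup>2 \<partial>M) + B2 * (\<integral>w. \<sigma>2 (\<phi> k w) \<partial>M) + C2"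
    using bound(2) by simp
qed

lemma cross_term_eq_0:
  assumes a: "integrable M (\<lambda>w. (norm (x k w - xs))\<^sup>2)"
    and d: "integrable M (\<lambda>w. (norm (h k w - g (\<xi> k w) xs))\<^sup>2)"
  shows "integrable M (\<lambda>w. inner (x k w - xs) (h k w - g (\<xi> k w) xs))"
    and "(\<integral>w. inner (x k w - xs) (h k w - g (\<xi> k w) xs) \<partial>M) = 0"
proof -
  have component: "integrable M (\<lambda>w. inner (x k w - xs) e * inner (h k w - g (\<xi> k w) xs) e)
      \<and> (\<integral>w. inner (x k w - xs) e * inner (h k w - g (\<xi> k w) xs) e \<partial>M) = 0"
    if e: "e \<in> Basis" for e
  proof -
    let ?a = "\<lambda>w. inner (x k w - xs) e" and ?d = "\<lambda>w. inner (h k w - g (\<xi> k w) xs) e"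
      and ?g = "\<lambda>w. inner (g (\<xi> k w) xs) e"
    have int_ad: "integrable M (\<lambda>w. ?a w * ?d w)"
      by (rule integrable_mult_of_square_integrable[OF _ _
            integrable_inner_Basis_square[OF _ a e] integrable_inner_Basis_square[OF _ d e]])
        measurable
    note int_ga = integral_inner_grad_xs_eq_0[OF a e]
    have split: "?a w * inner (h k w) e = ?a w * ?d w + ?g w * ?a w" for w
      by (simp add: inner_diff_left algebra_simps)
    have int_ah: "integrable M (\<lambda>w. ?a w * inner (h k w) e)"
      unfolding split using int_ad int_ga(1) by (rule Bochner_Integration.integrable_add)
    have "(\<integral>w. ?a w * ?d w \<partial>M) = (\<integral>w. ?a w * inner (h k w) e \<partial>M) - (\<integral>w. ?g w * ?a w \<partial>M)"
      unfolding split using int_ad int_ga(1) by simp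
    also have "\<dots> = 0"
      using integral_inner_h_eq_0[OF int_ah e] int_ga(2) by simp
    finally show ?thesis using int_ad by simp
  qed
  have inner_sum: "inner (x k w - xs) (h k w - g (\<xi> k w) xs)
      = (\<Sum>e\<in>Basis. inner (x k w - xs) e * inner (h k w - g (\<xi> k w) xs) e)" for w
    by (rule euclidean_inner)
  show "integrable M (\<lambda>w. inner (x k w - xs) (h k w - g (\<xi> k w) xs))"
    unfolding inner_sum using component by (intro Bochner_Integration.integrable_sum) blast
  show "(\<integral>w. inner (x k w - xs) (h k w - g (\<xi> k w) xs) \<partial>M) = 0"
    unfolding inner_sum using component by (subst Bochner_Integration.integral_sum) auto
qed

lemma dist_second_moment:
  assumes E: "integrable M (\<lambda>w. (norm (x k w - xs))\<^sup>2)"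
    and S: "integrable M (\<lambda>w. \<sigma>2 (\<phi> k w))"
  shows "integrable M (\<lambda>w. (norm (x (Suc k) w - xs))\<^sup>2)"
    and "(\<integral>w. (norm (x (Suc k) w - xs))\<^sup>2 \<partial>M)
      \<le> ((\<integral>w. (norm (x k w - xs))\<^sup>2 \<partial>M)
          + \<gamma>\<^sup>2 * (A1 * (\<integral>w. (norm (x k w - xs))\<^sup>2 \<partial>M) + B1 * (\<integral>w. \<sigma>2 (\<phi> k w) \<partial>M) + C1))
        / (1 + \<gamma> * \<mu>)\<^sup>2"
proof -
  let ?a = "\<lambda>w. x k w - xs" and ?d = "\<lambda>w. h k w - g (\<xi> k w) xs"
  let ?N = "\<lambda>w. (norm (?a w + \<gamma> *\<^sub>R ?d w))\<^sup>2 / (1 + \<gamma> * \<mu>)\<^sup>2"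
  have c_pos: "0 < (1 + \<gamma> * \<mu>)\<^sup>2"
    using mult_nonneg_nonneg[of \<gamma> \<mu>] mu_nonneg gamma_pos by (intro zero_less_power) linarith
  note d = noise_second_moment[OF E S]
  note cross = cross_term_eq_0[OF E d(1)]
  have expand: "(norm (?a w + \<gamma> *\<^sub>R ?d w))\<^sup>2
      = (norm (?a w))\<^sup>2 + 2 * \<gamma> * inner (?a w) (?d w) + \<gamma>\<^sup>2 * (norm (?d w))\<^sup>2" for w
    by (rule power2_norm_add_scaleR)
  have int_N: "integrable M ?N"
    unfolding expand using E d(1) cross(1) by simp
  have ptw: "(norm (x (Suc k) w - xs))\<^sup>2 \<le> ?N w" if "w \<in> space M" for w
    using iterate_dist_contraction[OF that, of k] c_pos by (simp add: pos_le_divide_eq mult.commute)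
  show int: "integrable M (\<lambda>w. (norm (x (Suc k) w - xs))\<^sup>2)"
    by (rule Bochner_Integration.integrable_bound[OF int_N]) (use ptw c_pos in \<open>auto intro!: AE_I2\<close>)
  have "(\<integral>w. (norm (x (Suc k) w - xs))\<^sup>2 \<partial>M) \<le> (\<integral>w. ?N w \<partial>M)"
    using int int_N ptw by (intro integral_mono) auto
  also have "\<dots> = ((\<integral>w. (norm (?a w))\<^sup>2 \<partial>M) + \<gamma>\<^sup>2 * (\<integral>w. (norm (?d w))\<^sup>2 \<partial>M)) / (1 + \<gamma> * \<mu>)\<^sup>2"
    unfolding expand using E d(1) cross by simp
  also have "\<dots> \<le> ((\<integral>w. (norm (x k w - xs))\<^sup>2 \<partial>M)
          + \<gamma>\<^sup>2 * (A1 * (\<integral>w. (norm (x k w - xs))\<^sup>2 \<partial>M) + B1 * (\<integral>w. \<sigma>2 (\<phi> k w) \<partial>M) + C1))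
        / (1 + \<gamma> * \<mu>)\<^sup>2"
    using d(2) c_pos by (intro divide_right_mono add_left_mono mult_left_mono) auto
  finally show "(\<integral>w. (norm (x (Suc k) w - xs))\<^sup>2 \<partial>M) \<le> \<dots>" .
qed

lemma integrable_iterates:
  "integrable M (\<lambda>w. (norm (x k w - xs))\<^sup>2) \<and> integrable M (\<lambda>w. \<sigma>2 (\<phi> k w))"
proof (induction k)
  case 0
  have "integrable M (\<lambda>w. (norm (x0 - xs))\<^sup>2)" "integrable M (\<lambda>w. \<sigma>2 \<phi>0)" by simp_all
  then show ?case
    using Bochner_Integration.integrable_cong[OF refl, of M "\<lambda>w. (norm (x 0 w - xs))\<^sup>2"]
      Bochner_Integration.integrable_cong[OF refl, of M "\<lambda>w. \<sigma>2 (\<phi> 0 w)"]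
    by (simp add: x_init phi_init)
next
  case (Suc k)
  then show ?case
    using dist_second_moment(1) sigma_second_moment(1) by blast
qed

end

lemma linear_recursion_bound:
  fixes \<Psi> :: "nat \<Rightarrow> real"
  assumes step: "\<And>k. \<Psi> (Suc k) \<le> \<theta> * \<Psi> k + \<zeta>"
    and "0 \<le> \<theta>" "\<theta> < 1" "0 \<le> \<zeta>"
  shows "\<Psi> k \<le> \<theta> ^ k * \<Psi> 0 + \<zeta> / (1 - \<theta>)"
proof (induction k)
  case 0
  then show ?case using assms by simp
next
  case (Suc k)
  have "\<Psi> (Suc k) \<le> \<theta> * (\<theta> ^ k * \<Psi> 0 + \<zeta> / (1 - \<theta>)) + \<zeta>"
    using step[of k] Suc \<open>0 \<le> \<theta>\<close> by (smt (verit) mult_left_mono)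
  also have "\<dots> = \<theta> ^ Suc k * \<Psi> 0 + \<zeta> / (1 - \<theta>)"
    using \<open>\<theta> < 1\<close> by (simp add: field_simps)
  finally show ?case .
qed

lemma lyapunov_coefficients:
  fixes E S E' S' c \<gamma> \<alpha> A1 B1 C1 A2 B2 C2 :: real
  assumes E': "E' \<le> (E + \<gamma>\<^sup>2 * (A1 * E + B1 * S + C1)) / c"
    and S': "S' \<le> A2 * E' + B2 * S + C2"
    and "0 \<le> E" "0 \<le> S" "0 < c" "0 < \<alpha>" "0 \<le> A2"
  shows "E' + \<alpha> * S' \<le> max ((1 + \<gamma>\<^sup>2 * A1) * (1 + \<alpha> * A2) / c)
            (\<gamma>\<^sup>2 * B1 * (1 + \<alpha> * A2) / (\<alpha> * c) + B2) * (E + \<alpha> * S)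
          + (\<gamma>\<^sup>2 * C1 * (1 + \<alpha> * A2) / c + \<alpha> * C2)"
    (is "_ \<le> max ?t1 ?t2 * _ + ?\<zeta>")
proof -
  have "E' + \<alpha> * S' \<le> (1 + \<alpha> * A2) * E' + \<alpha> * B2 * S + \<alpha> * C2"
    using mult_left_mono[OF S', of \<alpha>] \<open>0 < \<alpha>\<close> by (simp add: algebra_simps)
  also have "\<dots> \<le> (1 + \<alpha> * A2) * ((E + \<gamma>\<^sup>2 * (A1 * E + B1 * S + C1)) / c) + \<alpha> * B2 * S + \<alpha> * C2"
    using E' assms by (intro add_right_mono mult_left_mono) auto
  also have "\<dots> = ?t1 * E + ?t2 * (\<alpha> * S) + ?\<zeta>"
    using assms by (simp add: field_simps)
  also have "\<dots> \<le> max ?t1 ?t2 * E + max ?t1 ?t2 * (\<alpha> * S) + ?\<zeta>"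
    using assms by (intro add_right_mono add_mono mult_right_mono) auto
  finally show ?thesis by (simp add: algebra_simps)
qed

theorem theorem1:
  fixes M :: "'w measure" and D :: "'xi measure"
    and f :: "'xi \<Rightarrow> 'a::euclidean_space \<Rightarrow> real"
    and g :: "'xi \<Rightarrow> 'a \<Rightarrow> 'a"
    and \<mu> \<gamma> \<alpha> A1 B1 C1 A2 B2 C2 \<theta> \<zeta> :: real
    and xs x0 :: 'a and \<phi>0 :: "'c::euclidean_space"
    and x :: "nat \<Rightarrow> 'w \<Rightarrow> 'a" and \<phi> :: "nat \<Rightarrow> 'w \<Rightarrow> 'c"
    and \<xi> :: "nat \<Rightarrow> 'w \<Rightarrow> 'xi" and h :: "nat \<Rightarrow> 'w \<Rightarrow> 'a"
    and H :: "nat \<Rightarrow> 'a \<Rightarrow> 'c \<Rightarrow> 'xi \<Rightarrow> 'a"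
    and \<sigma>2 :: "'c \<Rightarrow> real"
  assumes M: "prob_space M" and D: "prob_space D"
    and grad: "\<And>s y. s \<in> space D \<Longrightarrow> GDERIV (f s) y :> g s y"
    and mu_pos: "\<mu> > 0"
    and strong: "\<And>s u y. s \<in> space D \<Longrightarrow>
        f s y + inner (g s y) (u - y) + \<mu> / 2 * (norm (u - y))\<^sup>2 \<le> f s u"
    and f_meas: "\<And>y. (\<lambda>s. f s y) \<in> borel_measurable D"
    and f_int: "\<And>y. integrable D (\<lambda>s. f s y)"
    and g_int: "\<And>y. integrable D (\<lambda>s. g s y)"
    and interchange: "\<And>y. GDERIV (\<lambda>z. \<integral>s. f s z \<partial>D) y :> (\<integral>s. g s y \<partial>D)"
    and xs_min: "\<And>y. y \<noteq> xs \<Longrightarrow> (\<integral>s. f s xs \<partial>D) < (\<integral>s. f s y \<partial>D)"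
    and gamma_pos: "\<gamma> > 0"
    and x_meas: "\<And>k. x k \<in> borel_measurable M"
    and phi_meas: "\<And>k. \<phi> k \<in> borel_measurable M"
    and h_meas: "\<And>k. h k \<in> borel_measurable M"
    and xi_meas: "\<And>k. \<xi> k \<in> measurable M D"
    and xi_distr: "\<And>k. distr M D (\<xi> k) = D"
    and xi_indep: "\<And>k. prob_space.indep_set M
         {\<xi> k -` A \<inter> space M | A. A \<in> sets D} (past_events M D x \<phi> \<xi> h k)"
    and x_init: "\<And>w. w \<in> space M \<Longrightarrow> x 0 w = x0"
    and phi_init: "\<And>w. w \<in> space M \<Longrightarrow> \<phi> 0 w = \<phi>0"
    and h_def: "\<And>k w. w \<in> space M \<Longrightarrow> h k w = H k (x k w) (\<phi> k w) (\<xi> k w)"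
    and x_step: "\<And>k w. w \<in> space M \<Longrightarrow>
        x (Suc k) w = prox \<gamma> (f (\<xi> k w)) (x k w + \<gamma> *\<^sub>R h k w)"
    and sigma_nonneg: "\<And>c. \<sigma>2 c \<ge> 0"
    and sigma_meas: "\<sigma>2 \<in> borel_measurable borel"
    and consts_nonneg: "A1 \<ge> 0" "B1 \<ge> 0" "C1 \<ge> 0" "A2 \<ge> 0" "B2 \<ge> 0" "C2 \<ge> 0"
    and B2_lt: "B2 < 1"
    and ass_i: "\<And>k b. b \<in> Basis \<Longrightarrow>
        AE w in M. real_cond_exp M (gen_alg M (\<lambda>w. (x k w, \<phi> k w))) (\<lambda>w. inner (h k w) b) w = 0"
    and ass_ii: "\<And>k. AE w in M.
        nn_cond_exp M (gen_alg M (\<lambda>w. (x k w, \<phi> k w)))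
          (\<lambda>w. ennreal ((norm (h k w - g (\<xi> k w) xs))\<^sup>2)) w
        \<le> ennreal (A1 * (norm (x k w - xs))\<^sup>2 + B1 * \<sigma>2 (\<phi> k w) + C1)"
    and ass_iii: "\<And>k. AE w in M.
        nn_cond_exp M (gen_alg M (\<lambda>w. (x (Suc k) w, \<phi> k w)))
          (\<lambda>w. ennreal (\<sigma>2 (\<phi> (Suc k) w))) w
        \<le> ennreal (A2 * (norm (x (Suc k) w - xs))\<^sup>2 + B2 * \<sigma>2 (\<phi> k w) + C2)"
    and alpha_pos: "\<alpha> > 0"
    and cond1: "(1 + \<gamma>\<^sup>2 * A1) * (1 + \<alpha> * A2) / (1 + \<gamma> * \<mu>)\<^sup>2 < 1"
    and cond2: "\<gamma>\<^sup>2 * B1 * (1 + \<alpha> * A2) / (\<alpha> * (1 + \<gamma> * \<mu>)\<^sup>2) + B2 < 1"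
    and theta_def: "\<theta> = max ((1 + \<gamma>\<^sup>2 * A1) * (1 + \<alpha> * A2) / (1 + \<gamma> * \<mu>)\<^sup>2)
                            (\<gamma>\<^sup>2 * B1 * (1 + \<alpha> * A2) / (\<alpha> * (1 + \<gamma> * \<mu>)\<^sup>2) + B2)"
    and zeta_def: "\<zeta> = \<gamma>\<^sup>2 * C1 * (1 + \<alpha> * A2) / (1 + \<gamma> * \<mu>)\<^sup>2 + \<alpha> * C2"
  shows "0 \<le> \<theta> \<and> \<theta> < 1 \<and> 0 \<le> \<zeta> \<and>
    (\<forall>k. (\<integral>\<^sup>+ w. ennreal ((norm (x k w - xs))\<^sup>2 + \<alpha> * \<sigma>2 (\<phi> k w)) \<partial>M)
        \<le> ennreal (\<theta> ^ k * ((norm (x0 - xs))\<^sup>2 + \<alpha> * \<sigma>2 \<phi>0) + \<zeta> / (1 - \<theta>)))"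
proof -
  have mean_grad_xs: "(\<integral>s. g s xs \<partial>D) = 0"
    using interchange[of xs] by (rule gderiv_zero_at_minimum) (metis less_eq_real_def xs_min)
  interpret sppm_lc M D f g \<mu> \<gamma> xs x0 \<phi>0 x \<phi> \<xi> h \<sigma>2 A1 B1 C1 A2 B2 C2
    by (intro sppm_lc.intro[OF M] sppm_lc_axioms.intro[OF grad strong less_imp_le[OF mu_pos] gamma_pos
          g_int[of xs] mean_grad_xs x_meas phi_meas h_meas xi_meas xi_distr xi_indep x_init phi_init
          x_step sigma_nonneg sigma_meas consts_nonneg ass_i ass_ii ass_iii])
  define \<Psi> where "\<Psi> k = (\<integral>w. (norm (x k w - xs))\<^sup>2 \<partial>M) + \<alpha> * (\<integral>w. \<sigma>2 (\<phi> k w) \<partial>M)" for k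
  have "0 \<le> \<gamma>\<^sup>2 * B1 * (1 + \<alpha> * A2) / (\<alpha> * (1 + \<gamma> * \<mu>)\<^sup>2)"
    using consts_nonneg alpha_pos by simp
  then have rate: "0 \<le> \<theta>" "\<theta> < 1" "0 \<le> \<zeta>"
    using cond1 cond2 consts_nonneg alpha_pos unfolding theta_def zeta_def by (auto simp: le_max_iff_disj)
  have c_pos: "0 < (1 + \<gamma> * \<mu>)\<^sup>2"
    using mult_nonneg_nonneg[of \<gamma> \<mu>] mu_pos gamma_pos by (intro zero_less_power) linarith
  have "\<Psi> (Suc k) \<le> \<theta> * \<Psi> k + \<zeta>" for k
  proof -
    have E: "integrable M (\<lambda>w. (norm (x k w - xs))\<^sup>2)" and S: "integrable M (\<lambda>w. \<sigma>2 (\<phi> k w))"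
      using integrable_iterates by blast+
    note E' = dist_second_moment[OF E S]
    show ?thesis
      unfolding \<Psi>_def theta_def zeta_def
      using sigma_nonneg alpha_pos consts_nonneg c_pos
      by (intro lyapunov_coefficients[OF E'(2) sigma_second_moment(2)[OF E'(1) S]]) auto
  qed
  then have "\<Psi> k \<le> \<theta> ^ k * \<Psi> 0 + \<zeta> / (1 - \<theta>)" for k
    using rate by (rule linear_recursion_bound)
  moreover have "\<Psi> 0 = (norm (x0 - xs))\<^sup>2 + \<alpha> * \<sigma>2 \<phi>0"
  proof -
    have "(\<integral>w. (norm (x 0 w - xs))\<^sup>2 \<partial>M) = (\<integral>w. (norm (x0 - xs))\<^sup>2 \<partial>M)"
      by (rule Bochner_Integration.integral_cong) (simp_all add: x_init)
    moreover have "(\<integral>w. \<sigma>2 (\<phi> 0 w) \<partial>M) = (\<integral>w. \<sigma>2 \<phi>0 \<partial>M)"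
      by (rule Bochner_Integration.integral_cong) (simp_all add: phi_init)
    ultimately show ?thesis by (simp add: \<Psi>_def prob_space)
  qed
  moreover have "(\<integral>\<^sup>+ w. ennreal ((norm (x k w - xs))\<^sup>2 + \<alpha> * \<sigma>2 (\<phi> k w)) \<partial>M) = ennreal (\<Psi> k)" for k
    unfolding \<Psi>_def using integrable_iterates[of k] sigma_nonneg alpha_pos
    by (subst nn_integral_eq_integral) auto
  ultimately show ?thesis
    using rate by (auto intro!: ennreal_leI)
qed

end
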